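(* Let $\mathbb F$ be a field of characteristic $p>0$ and let $\mathfrak g$ be a finite-dimensional restricted Lie algebra over $\mathbb F$ with $[p]$-operator $g\mapsto g^{[p]}$. Let $(\varphi,\omega)\in C^2_*(\mathfrak g)$, and suppose that $\varphi=d^1(\psi)$ for some $\psi\in C^1(\mathfrak g)$. Then $(\varphi,\mathrm{ind}^1(\psi))\in C^2_*(\mathfrak g)$ and $\mathrm{ind}^2(\varphi,\omega)=\mathrm{ind}^2(\varphi,\mathrm{ind}^1(\psi))$.
   Context: $C^1(\mathfrak g)=\mathfrak g^*$ and $C^2(\mathfrak g)=(\wedge^2\mathfrak g)^*$ (cochains with trivial coefficients $\mathbb F$); $d^1:C^1(\mathfrak g)\to C^2(\mathfrak g)$ is $d^1(\psi)(g\wedge h)=\psi([g,h])$. Given $\varphi\in C^2(\mathfrak g)$, a map $\omega:\mathfrak g\to\mathbb F$ is called $\varphi$-compatible if for all $g,h\in\mathfrak g$ and $a\in\mathbb F$: $\omega(ag)=a^p\omega(g)$ and $$\omega(g+h)=\omega(g)+\omega(h)+\sum \frac{1}{\#(g)}\varphi([g_1,g_2,g_3,\dots,g_{p-1}]\wedge g_p),$$ where the sum runs over all sequences $(g_1,\dots,g_p)$ with each $g_i\in\{g,h\}$, $g_1=g$, $g_2=h$, the bracket $[g_1,\dots,g_{p-1}]$ is the left-normed iterated bracket, and $\#(g)$ is the number of $g_i$ equal to $g$. $C^2_*(\mathfrak g)=\{(\varphi,\omega):\varphi\in C^2(\mathfrak g),\ \omega:\mathfrak g\to\mathbb F\text{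 is }\varphi\text{-compatible}\}$. For $\psi\in C^1(\mathfrak g)$, $\mathrm{ind}^1(\psi):\mathfrak g\to\mathbb F$ is $\mathrm{ind}^1(\psi)(g)=\psi(g^{[p]})$. For $(\varphi,\omega)\in C^2_*(\mathfrak g)$, $\mathrm{ind}^2(\varphi,\omega):\mathfrak g\times\mathfrak g\to\mathbb F$ is $\mathrm{ind}^2(\varphi,\omega)(g,h)=\varphi(g\wedge h^{[p]})-\varphi([g,h,\dots,h]\wedge h)$, where in the left-normed bracket $[g,h,\dots,h]$ the element $h$ appears $p-1$ times. *)

theory Defs
  imports Main "HOL.Vector_Spaces"
begin

definition lie_algebra :: "('k::field \<Rightarrow> 'g::ab_group_add \<Rightarrow> 'g) \<Rightarrow> ('g \<Rightarrow> 'g \<Rightarrow> 'g) \<Rightarrow> bool" where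
  "lie_algebra sc br \<longleftrightarrow>
     vector_space sc \<and>
     (\<forall>x y z. br (x + y) z = br x z + br y z) \<and>
     (\<forall>x y z. br x (y + z) = br x y + br x z) \<and>
     (\<forall>a x y. br (sc a x) y = sc a (br x y)) \<and>
     (\<forall>a x y. br x (sc a y) = sc a (br x y)) \<and>
     (\<forall>x. br x x = 0) \<and>
     (\<forall>x y z. br x (br y z) + br y (br z x) + br z (br x y) = 0)"

definition finite_dim :: "('k::field \<Rightarrow> 'g::ab_group_add \<Rightarrow> 'g) \<Rightarrow> bool" where
  "finite_dim sc \<longleftrightarrow> (\<exists>B. finite B \<and> module.span sc B = UNIV)"

text \<open>Jacobson's s_i(x,y): i * s_i(x,y) is the coefficient of t^(i-1) in ad(t x + y)^(p-1)(x).
  Expanding ad(t x + y)^(p-1) = sum over words (z_1,...,z_(p-1)) in {t x, y} of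
  ad z_1 o ... o ad z_(p-1); a word is encoded by a bool list (True = x).\<close>

definition jacobson_s :: "('k::field \<Rightarrow> 'g::ab_group_add \<Rightarrow> 'g) \<Rightarrow> ('g \<Rightarrow> 'g \<Rightarrow> 'g) \<Rightarrow> nat \<Rightarrow> nat \<Rightarrow> 'g \<Rightarrow> 'g \<Rightarrow> 'g" where
  "jacobson_s sc br p i x y =
     sc (inverse (of_nat i))
       (\<Sum>bs\<in>{bs::bool list. length bs = p - 1 \<and> count_list bs True = i - 1}.
          foldr br (map (\<lambda>b. if b then x else y) bs) x)"

definition restricted_lie_algebra ::
  "('k::field \<Rightarrow> 'g::ab_group_add \<Rightarrow> 'g) \<Rightarrow> ('g \<Rightarrow> 'g \<Rightarrow> 'g) \<Rightarrow> ('g \<Rightarrow> 'g) \<Rightarrow> bool" where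
  "restricted_lie_algebra sc br pw \<longleftrightarrow>
     lie_algebra sc br \<and>
     (\<forall>a x. pw (sc a x) = sc (a ^ CHAR('k)) (pw x)) \<and>
     (\<forall>x y. br (pw x) y = ((br x) ^^ CHAR('k)) y) \<and>
     (\<forall>x y. pw (x + y) = pw x + pw y + (\<Sum>i\<in>{1..CHAR('k) - 1}. jacobson_s sc br (CHAR('k)) i x y))"

text \<open>C^1: linear functionals. C^2 = (\<wedge>^2 g)^*: alternating bilinear forms phi, phi(g \<wedge> h) = phi g h.\<close>

definition C1 :: "('k::field \<Rightarrow> 'g::ab_group_add \<Rightarrow> 'g) \<Rightarrow> ('g \<Rightarrow> 'k) set" where
  "C1 sc = {\<psi>. Vector_Spaces.linear sc (*) \<psi>}"

definition C2 :: "('k::field \<Rightarrow> 'g::ab_group_add \<Rightarrow> 'g) \<Rightarrow> ('g \<Rightarrow> 'g \<Rightarrow> 'k) set" where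
  "C2 sc = {\<phi>. (\<forall>x. Vector_Spaces.linear sc (*) (\<phi> x)) \<and>
               (\<forall>y. Vector_Spaces.linear sc (*) (\<lambda>x. \<phi> x y)) \<and>
               (\<forall>x. \<phi> x x = 0)}"

definition d1 :: "('g \<Rightarrow> 'g \<Rightarrow> 'g) \<Rightarrow> ('g \<Rightarrow> 'k) \<Rightarrow> ('g \<Rightarrow> 'g \<Rightarrow> 'k)" where
  "d1 br \<psi> = (\<lambda>g h. \<psi> (br g h))"

text \<open>The sequences (g_1,...,g_p) with g_1 = g, g_2 = h and g_3..g_p in {g,h}
  are encoded by bool lists bs of length p-2 (True = g), so the sequence is
  g # h # map sel bs; #(g) = 1 + number of True in bs (positions chosen as g).
  The left-normed bracket [g_1,...,g_(p-1)] is foldl br g_1 [g_2,...,g_(p-1)].\<close>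

definition compatible ::
  "('k::field \<Rightarrow> 'g::ab_group_add \<Rightarrow> 'g) \<Rightarrow> ('g \<Rightarrow> 'g \<Rightarrow> 'g) \<Rightarrow> ('g \<Rightarrow> 'g \<Rightarrow> 'k) \<Rightarrow> ('g \<Rightarrow> 'k) \<Rightarrow> bool" where
  "compatible sc br \<phi> \<omega> \<longleftrightarrow>
     (\<forall>a g. \<omega> (sc a g) = a ^ CHAR('k) * \<omega> g) \<and>
     (\<forall>g h. \<omega> (g + h) = \<omega> g + \<omega> h +
        (\<Sum>bs\<in>{bs::bool list. length bs = CHAR('k) - 2}.
           (let tl_seq = h # map (\<lambda>b. if b then g else h) bs in
             inverse (of_nat (Suc (count_list bs True))) *
             \<phi> (foldl br g (butlast tl_seq)) (last tl_seq))))"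

definition C2_star ::
  "('k::field \<Rightarrow> 'g::ab_group_add \<Rightarrow> 'g) \<Rightarrow> ('g \<Rightarrow> 'g \<Rightarrow> 'g) \<Rightarrow> (('g \<Rightarrow> 'g \<Rightarrow> 'k) \<times> ('g \<Rightarrow> 'k)) set" where
  "C2_star sc br = {(\<phi>, \<omega>). \<phi> \<in> C2 sc \<and> compatible sc br \<phi> \<omega>}"

definition ind1 :: "('g \<Rightarrow> 'g) \<Rightarrow> ('g \<Rightarrow> 'k) \<Rightarrow> ('g \<Rightarrow> 'k)" where
  "ind1 pw \<psi> = (\<lambda>g. \<psi> (pw g))"

definition ind2 :: "('g \<Rightarrow> 'g \<Rightarrow> 'g) \<Rightarrow> ('g \<Rightarrow> 'g) \<Rightarrow> ('g \<Rightarrow> 'g \<Rightarrow> 'k::field) \<times> ('g \<Rightarrow> 'k) \<Rightarrow> 'g \<Rightarrow> 'g \<Rightarrow> 'k" where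
  "ind2 br pw \<phi>\<omega> = (\<lambda>g h. fst \<phi>\<omega> g (pw h) - fst \<phi>\<omega> (foldl br g (replicate (CHAR('k) - 1) h)) h)"

end

theory Submission
  imports Defs "HOL-Computational_Algebra.Primes"
begin

text \<open>Apply \<psi> to Jacobson's formula for (g + h)^[p]. The Lie words
  ad z_1 o ... o ad z_(p-1) (g) defining s_i(g,h) are, up to the sign (-1)^(p-1) = 1,
  the left-normed brackets [g, z_(p-1), ..., z_1]. Those with z_(p-1) = g vanish because
  [g,g] = 0; grouping the remaining brackets [g, h, z_(p-2), ..., z_1] by the number of
  occurrences of g turns the weights 1/i into the weights 1/#(g) of the correction term
  in the definition of d^1(\<psi>)-compatibility.\<close>

lemma finite_lists_length_eq_UNIV [simp]: "finite {xs :: 'a::finite list. length xs = n}"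
  using finite_lists_length_eq[OF finite_UNIV[where 'a = 'a], of n] by simp

lemma finite_lists_length_eq_UNIV_conj [simp]:
  "finite {xs :: 'a::finite list. length xs = n \<and> P xs}"
  by (rule finite_subset[of _ "{xs. length xs = n}"]) auto

lemma minus_one_power_CHAR_minus_one:
  assumes "CHAR('a::idom) > 0"
  shows "(-1 :: 'a) ^ (CHAR('a) - 1) = 1"
proof (cases "CHAR('a) = 2")
  case True
  then have "(-1 :: 'a) ^ (CHAR('a) - 1) = -1" by simp
  also have "\<dots> = 1" by (rule uminus_CHAR_2[OF True])
  finally show ?thesis .
next
  case False
  have "prime CHAR('a)" using prime_CHAR_semidom[OF assms] .
  moreover from this have "CHAR('a) > 2" using False prime_ge_2_nat[of "CHAR('a)"] by linarith
  ultimately have "odd (CHAR('a))" by (rule prime_odd_nat)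
  then show ?thesis by simp
qed

lemma lie_bracket_zero_left:
  assumes "lie_algebra sc br"
  shows "br 0 y = 0"
proof -
  interpret vector_space sc using assms by (simp add: lie_algebra_def)
  have "br (sc 0 0) y = sc 0 (br 0 y)" using assms unfolding lie_algebra_def by blast
  then show ?thesis by simp
qed

lemma lie_bracket_antisym:
  assumes "lie_algebra sc br"
  shows "br x y = - br y x"
proof -
  have add_left: "\<And>x y z. br (x + y) z = br x z + br y z"
    and add_right: "\<And>x y z. br x (y + z) = br x y + br x z"
    and alt: "\<And>x. br x x = 0" using assms by (auto simp: lie_algebra_def)
  have "0 = br (x + y) (x + y)" by (simp add: alt)
  also have "\<dots> = br x x + br y x + (br x y + br y y)" by (simp only: add_left add_right)
  also have "\<dots> = br x y + br y x" by (simp add: alt)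
  finally have "br x y + br y x = 0" by (rule sym)
  then show ?thesis by (simp add: eq_neg_iff_add_eq_0)
qed

lemma foldl_lie_bracket_zero:
  assumes "lie_algebra sc br"
  shows "foldl br 0 xs = 0"
  by (induction xs) (simp_all add: lie_bracket_zero_left[OF assms])

lemma foldl_lie_bracket_eq_foldr_rev:
  assumes lie: "lie_algebra sc br"
  shows "foldl br x ys = sc ((-1) ^ length ys) (foldr br (rev ys) x)"
proof -
  interpret vector_space sc using lie by (simp add: lie_algebra_def)
  have scale_right: "br y (sc a v) = sc a (br y v)" for a y v
    using lie by (simp add: lie_algebra_def)
  show ?thesis
  proof (induction ys rule: rev_induct)
    case (snoc y ys)
    have "foldl br x (ys @ [y]) = - br y (foldl br x ys)"
      using lie_bracket_antisym[OF lie, of "foldl br x ys" y] by simp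
    also have "\<dots> = - sc ((-1) ^ length ys) (br y (foldr br (rev ys) x))"
      by (simp only: snoc scale_right)
    also have "\<dots> = sc ((-1) ^ length (ys @ [y])) (foldr br (rev (ys @ [y])) x)"
      by simp
    finally show ?case .
  qed simp
qed

lemma sum_bool_lists_rev:
  "(\<Sum>bs\<in>{bs::bool list. length bs = n \<and> count_list bs True = k}. f (rev bs))
     = (\<Sum>bs\<in>{bs. length bs = n \<and> count_list bs True = k}. f bs)"
  by (rule sum.reindex_bij_witness[of _ rev rev]) auto

lemma sum_bool_lists_Cons_False:
  assumes "\<And>cs. F (True # cs) = 0"
  shows "(\<Sum>bs\<in>{bs. length bs = Suc n \<and> count_list bs True = k}. F bs)
     = (\<Sum>cs\<in>{cs. length cs = n \<and> count_list cs True = k}. F (False # cs))"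
proof -
  let ?C = "{cs. length cs = n \<and> count_list cs True = k}"
  have "(\<Sum>bs\<in>{bs. length bs = Suc n \<and> count_list bs True = k}. F bs)
      = (\<Sum>bs\<in>(#) False ` ?C. F bs)"
  proof (rule sum.mono_neutral_right)
    show "\<forall>bs \<in> {bs. length bs = Suc n \<and> count_list bs True = k} - (#) False ` ?C. F bs = 0"
    proof
      fix bs assume bs: "bs \<in> {bs. length bs = Suc n \<and> count_list bs True = k} - (#) False ` ?C"
      then obtain b cs where "bs = b # cs" "length cs = n" by (auto simp: length_Suc_conv)
      with bs show "F bs = 0" using assms by (cases b) (simp_all add: image_iff)
    qed
  qed (simp_all add: image_subset_iff)
  also have "\<dots> = (\<Sum>cs\<in>?C. F (False # cs))"
    by (simp add: sum.reindex)
  finally show ?thesis .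
qed

lemma sum_bool_lists_group_count:
  fixes f :: "bool list \<Rightarrow> 'a::field"
  shows "(\<Sum>i\<in>{1..Suc n}. inverse (of_nat i) *
            (\<Sum>cs\<in>{cs. length cs = n \<and> count_list cs True = i - 1}. f cs))
       = (\<Sum>cs\<in>{cs. length cs = n}. inverse (of_nat (Suc (count_list cs True))) * f cs)"
proof -
  let ?S = "{cs::bool list. length cs = n}" and ?c = "\<lambda>cs. Suc (count_list cs True)"
  have "?c ` ?S \<subseteq> {1..Suc n}"
    using count_le_length by fastforce
  then have "(\<Sum>cs\<in>?S. inverse (of_nat (?c cs)) * f cs)
      = (\<Sum>i\<in>{1..Suc n}. \<Sum>cs\<in>{cs \<in> ?S. ?c cs = i}. inverse (of_nat (?c cs)) * f cs)"
    by (intro sum.group[symmetric]) simp_all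
  also have "\<dots> = (\<Sum>i\<in>{1..Suc n}. inverse (of_nat i) *
                    (\<Sum>cs\<in>{cs. length cs = n \<and> count_list cs True = i - 1}. f cs))"
  proof (rule sum.cong[OF refl])
    fix i assume "i \<in> {1..Suc n}"
    then have count_class: "{cs \<in> ?S. ?c cs = i} = {cs. length cs = n \<and> count_list cs True = i - 1}"
      by auto
    have "(\<Sum>cs\<in>{cs \<in> ?S. ?c cs = i}. inverse (of_nat (?c cs)) * f cs)
        = (\<Sum>cs\<in>{cs \<in> ?S. ?c cs = i}. inverse (of_nat i) * f cs)"
      by (rule sum.cong) auto
    then show "(\<Sum>cs\<in>{cs \<in> ?S. ?c cs = i}. inverse (of_nat (?c cs)) * f cs)
        = inverse (of_nat i) * (\<Sum>cs\<in>{cs. length cs = n \<and> count_list cs True = i - 1}. f cs)"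
      unfolding count_class sum_distrib_left .
  qed
  finally show ?thesis by simp
qed

lemma linear_jacobson_s:
  fixes sc :: "'k::field \<Rightarrow> 'g::ab_group_add \<Rightarrow> 'g"
  assumes char: "CHAR('k) > 0" and lie: "lie_algebra sc br"
    and lin: "Vector_Spaces.linear sc (*) \<psi>"
  shows "\<psi> (jacobson_s sc br CHAR('k) i g h) = inverse (of_nat i) *
     (\<Sum>bs\<in>{bs. length bs = CHAR('k) - 1 \<and> count_list bs True = i - 1}.
        \<psi> (foldl br g (map (\<lambda>b. if b then g else h) bs)))"
proof -
  interpret vector_space sc using lie by (simp add: lie_algebra_def)
  interpret L: Vector_Spaces.linear sc "(*)" \<psi> by (rule lin)
  let ?sel = "\<lambda>b. if b then g else h"
  have word: "foldr br (map ?sel bs) g = foldl br g (map ?sel (rev bs))"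
    if "length bs = CHAR('k) - 1" for bs
    using that minus_one_power_CHAR_minus_one[OF char]
    by (simp add: foldl_lie_bracket_eq_foldr_rev[OF lie] rev_map)
  have "\<psi> (jacobson_s sc br CHAR('k) i g h) = inverse (of_nat i) *
     (\<Sum>bs\<in>{bs. length bs = CHAR('k) - 1 \<and> count_list bs True = i - 1}.
        \<psi> (foldr br (map ?sel bs) g))"
    unfolding jacobson_s_def L.scale L.sum ..
  also have "\<dots> = inverse (of_nat i) *
     (\<Sum>bs\<in>{bs. length bs = CHAR('k) - 1 \<and> count_list bs True = i - 1}.
        \<psi> (foldl br g (map ?sel (rev bs))))"
    using word by (intro arg_cong2[where f = "(*)"] sum.cong) simp_all
  finally show ?thesis
    unfolding sum_bool_lists_rev[where f = "\<lambda>bs. \<psi> (foldl br g (map ?sel bs))"] .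
qed

lemma compatible_d1_ind1:
  fixes sc :: "'k::field \<Rightarrow> 'g::ab_group_add \<Rightarrow> 'g"
  assumes char: "CHAR('k) > 0" and restricted: "restricted_lie_algebra sc br pw"
    and lin: "Vector_Spaces.linear sc (*) \<psi>"
  shows "compatible sc br (d1 br \<psi>) (ind1 pw \<psi>)"
  unfolding compatible_def
proof (intro conjI allI)
  interpret L: Vector_Spaces.linear sc "(*)" \<psi> by (rule lin)
  fix a g
  have pw_scale: "pw (sc a g) = sc (a ^ CHAR('k)) (pw g)"
    using restricted unfolding restricted_lie_algebra_def by blast
  show "ind1 pw \<psi> (sc a g) = a ^ CHAR('k) * ind1 pw \<psi> g"
    unfolding ind1_def pw_scale L.scale ..
next
  interpret L: Vector_Spaces.linear sc "(*)" \<psi> by (rule lin)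
  have lie: "lie_algebra sc br"
    using restricted unfolding restricted_lie_algebra_def by blast
  have "CHAR('k) \<ge> 2"
    using prime_ge_2_nat[OF prime_CHAR_semidom[OF char]] .
  then obtain n where n: "CHAR('k) - 1 = Suc n" "CHAR('k) - 2 = n"
    by (metis Suc_diff_Suc Suc_1 Suc_le_lessD diff_Suc_1 less_eq_Suc_le)
  fix g h :: 'g
  let ?sel = "\<lambda>b. if b then g else h"
  have pw_add: "pw (g + h) = pw g + pw h + (\<Sum>i\<in>{1..CHAR('k) - 1}. jacobson_s sc br CHAR('k) i g h)"
    using restricted unfolding restricted_lie_algebra_def by blast
  have "br g g = 0"
    using lie unfolding lie_algebra_def by blast
  then have words_at_g_vanish: "\<psi> (foldl br g (map ?sel (True # cs))) = 0" for cs
    by (simp add: foldl_lie_bracket_zero[OF lie] L.zero)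
  have left_normed: "br (foldl br g (butlast (h # xs))) (last (h # xs)) = foldl br g (h # xs)" for xs
    by (induction xs rule: rev_induct) simp_all
  have "ind1 pw \<psi> (g + h) = ind1 pw \<psi> g + ind1 pw \<psi> h +
      \<psi> (\<Sum>i\<in>{1..CHAR('k) - 1}. jacobson_s sc br CHAR('k) i g h)"
    unfolding ind1_def pw_add L.add ..
  also have "\<psi> (\<Sum>i\<in>{1..CHAR('k) - 1}. jacobson_s sc br CHAR('k) i g h)
      = (\<Sum>i\<in>{1..Suc n}. inverse (of_nat i) *
           (\<Sum>cs\<in>{cs. length cs = n \<and> count_list cs True = i - 1}.
              \<psi> (foldl br g (h # map ?sel cs))))"
    unfolding L.sum linear_jacobson_s[OF char lie lin] n(1)
      sum_bool_lists_Cons_False[where F = "\<lambda>bs. \<psi> (foldl br g (map ?sel bs))", OF words_at_g_vanish]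
    by simp
  also have "\<dots> = (\<Sum>cs\<in>{cs. length cs = CHAR('k) - 2}.
      (let tl_seq = h # map ?sel cs in
        inverse (of_nat (Suc (count_list cs True))) *
        d1 br \<psi> (foldl br g (butlast tl_seq)) (last tl_seq)))"
    unfolding sum_bool_lists_group_count n(2) Let_def d1_def left_normed ..
  finally show "ind1 pw \<psi> (g + h) = ind1 pw \<psi> g + ind1 pw \<psi> h + \<dots>" .
qed

theorem lemma2p1:
  fixes sc :: "'k::field \<Rightarrow> 'g::ab_group_add \<Rightarrow> 'g"
    and br :: "'g \<Rightarrow> 'g \<Rightarrow> 'g"
    and pw :: "'g \<Rightarrow> 'g"
    and \<phi> :: "'g \<Rightarrow> 'g \<Rightarrow> 'k"
    and \<omega> :: "'g \<Rightarrow> 'k"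
    and \<psi> :: "'g \<Rightarrow> 'k"
  assumes "CHAR('k) > 0"
    and "restricted_lie_algebra sc br pw"
    and "finite_dim sc"
    and "(\<phi>, \<omega>) \<in> C2_star sc br"
    and "\<psi> \<in> C1 sc"
    and "\<phi> = d1 br \<psi>"
  shows "(\<phi>, ind1 pw \<psi>) \<in> C2_star sc br \<and> ind2 br pw (\<phi>, \<omega>) = ind2 br pw (\<phi>, ind1 pw \<psi>)"
proof
  have "compatible sc br \<phi> (ind1 pw \<psi>)"
    using compatible_d1_ind1[OF assms(1,2)] assms(5,6) by (simp add: C1_def)
  then show "(\<phi>, ind1 pw \<psi>) \<in> C2_star sc br"
    using assms(4) by (simp add: C2_star_def)
  \<comment> \<open>ind2 only reads the cochain component\<close>
  show "ind2 br pw (\<phi>, \<omega>) = ind2 br pw (\<phi>, ind1 pw \<psi>)"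
    by (simp add: ind2_def)
qed

end
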